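(* Fix an angle $0<\theta\le\pi/8$ and, for an angle $\alpha$, let $\phi_\alpha=\cos(\alpha)|0\rangle+\sin(\alpha)|1\rangle$. Define $\phi_{0,0}=\phi_{-\theta}$, $\phi_{0,1}=\phi_{\theta}$, $\phi_{1,0}=\phi_{\pi/2-\theta}$, $\phi_{1,1}=\phi_{\pi/2+\theta}$. Consider the bit escrow protocol with the reveal challenge: in the deposit step an honest Alice with bit $b$ picks a uniformly random $x\in\{0,1\}$ and sends the qubit $\phi_{b,x}$ to Bob; in the reveal step Alice sends the classical bits $b$ and $x$ to Bob, who measures the deposited qubit in the basis $\{\phi_{0,x},\phi_{1,x}\}$ and sets his result $r_B=b$ if the outcome is $\phi_{b,x}$ and $r_B=err$ otherwise. Then for every $\epsilon\ge 0$ this protocol is $\left(\epsilon,\ \gamma=\frac{2\sqrt{\epsilon}}{\cos(2\theta)}\right)$ binding.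
   Context: Binding is defined for two-step protocols of the following form. Deposit: Alice prepares an arbitrary joint state $\psi_{AB}$ of quantum registers $A$ and $B$ (here $B$ is one qubit) and sends $B$ to Bob, keeping $A$. Reveal: Alice and Bob communicate, Bob follows the protocol honestly and Alice is arbitrary; Alice has one reveal strategy (the "zero strategy") which she uses if she wants to bias the result towards $0$ and another (the "one strategy") for biasing towards $1$, both starting from the same deposited state. Bob decides on a result $r_B\in\{0,1,err\}$. Let $p_0$ (resp. $p_1$) be the probability that, under the zero strategy, Alice claims the bit is $0$ (resp. $1$), and $p_{err}$ the probability that $r_B=err$ under the zero strategy; define $q_0,q_1,q_{err}$ likewise for the one strategy. The protocol is $(\epsilon,\gamma)$ binding if, whenever Bob is honest, for any strategy of Alice, $p_{err}\le\epsilon$ and $q_{err}\le\epsilon$ imply $|p_0-q_0|\le\gamma$ and $|p_1-q_1|\le\gamma$. Classical bits that Alice sends as qubits are measured by Bob in the computational basis. *)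

theory Defs
  imports Complex_Main "HOL-Library.Complex_Order"
begin

text \<open>Qubit computational basis indexed by bool: False = |0>, True = |1>.
  Operators on a finite-dimensional space with basis index type 'i are
  functions 'i \<Rightarrow> 'i \<Rightarrow> complex (matrix entries).\<close>

definition phi :: "real \<Rightarrow> bool \<Rightarrow> real" where
  "phi \<alpha> c = (if c then sin \<alpha> else cos \<alpha>)"

definition escrow_angle :: "real \<Rightarrow> bool \<Rightarrow> bool \<Rightarrow> real" where
  "escrow_angle \<theta> b x =
     (if \<not> b then (if \<not> x then - \<theta> else \<theta>)
      else (if \<not> x then pi/2 - \<theta> else pi/2 + \<theta>))"

definition phi_bx :: "real \<Rightarrow> bool \<Rightarrow> bool \<Rightarrow> bool \<Rightarrow> real" where
  "phi_bx \<theta> b x = phi (escrow_angle \<theta> b x)"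

definition proj :: "(bool \<Rightarrow> real) \<Rightarrow> bool \<Rightarrow> bool \<Rightarrow> complex" where
  "proj v c c' = complex_of_real (v c * v c')"

definition id_op :: "'i \<Rightarrow> 'i \<Rightarrow> complex" where
  "id_op i j = (if i = j then 1 else 0)"

text \<open>Positive semidefinite (complex order: the quadratic form is real and nonnegative).\<close>
definition psd :: "('i::finite \<Rightarrow> 'i \<Rightarrow> complex) \<Rightarrow> bool" where
  "psd A \<longleftrightarrow> (\<forall>v :: 'i \<Rightarrow> complex. 0 \<le> (\<Sum>i\<in>UNIV. \<Sum>j\<in>UNIV. cnj (v i) * A i j * v j))"

definition density_op :: "('i::finite \<Rightarrow> 'i \<Rightarrow> complex) \<Rightarrow> bool" where
  "density_op \<rho> \<longleftrightarrow> psd \<rho> \<and> (\<Sum>i\<in>UNIV. \<rho> i i) = 1"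

text \<open>A POVM on register A with outcomes (b,x) \<in> {0,1}^2 (Alice's claimed bits).\<close>
definition povm4 :: "(bool \<Rightarrow> bool \<Rightarrow> 'a::finite \<Rightarrow> 'a \<Rightarrow> complex) \<Rightarrow> bool" where
  "povm4 M \<longleftrightarrow> (\<forall>b x. psd (M b x)) \<and>
     (\<forall>a a'. (\<Sum>b\<in>UNIV. \<Sum>x\<in>UNIV. M b x a a') = id_op a a')"

text \<open>Re tr[(E \<otimes> F) \<rho>] for a state \<rho> of A \<otimes> B (B a qubit).\<close>
definition joint_prob ::
  "(('a::finite \<times> bool) \<Rightarrow> ('a \<times> bool) \<Rightarrow> complex) \<Rightarrow> ('a \<Rightarrow> 'a \<Rightarrow> complex)
     \<Rightarrow> (bool \<Rightarrow> bool \<Rightarrow> complex) \<Rightarrow> real" where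
  "joint_prob \<rho> E F = Re (\<Sum>a\<in>UNIV. \<Sum>a'\<in>UNIV. \<Sum>c\<in>UNIV. \<Sum>c'\<in>UNIV.
      E a a' * F c c' * \<rho> (a', c') (a, c))"

definition claim_prob ::
  "(('a::finite \<times> bool) \<Rightarrow> ('a \<times> bool) \<Rightarrow> complex) \<Rightarrow> (bool \<Rightarrow> bool \<Rightarrow> 'a \<Rightarrow> 'a \<Rightarrow> complex)
     \<Rightarrow> bool \<Rightarrow> real" where
  "claim_prob \<rho> M b = (\<Sum>x\<in>UNIV. joint_prob \<rho> (M b x) id_op)"

text \<open>Probability that Bob outputs err: Alice announces (b,x), Bob measures B in basis
  {phi_{0,x}, phi_{1,x}} and obtains phi_{not b, x}.\<close>
definition err_prob ::
  "real \<Rightarrow> (('a::finite \<times> bool) \<Rightarrow> ('a \<times> bool) \<Rightarrow> complex) \<Rightarrow> (bool \<Rightarrow> bool \<Rightarrow> 'a \<Rightarrow> 'a \<Rightarrow> complex)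
     \<Rightarrow> real" where
  "err_prob \<theta> \<rho> M = (\<Sum>b\<in>UNIV. \<Sum>x\<in>UNIV. joint_prob \<rho> (M b x) (proj (phi_bx \<theta> (\<not> b) x)))"

end

theory Submission
  imports Defs "HOL-Analysis.L2_Norm"
begin

(* For an announced pair (b, x), Alice's measurement outcome leaves Bob's qubit in an unnormalised
   state K, and Bob errs with weight e = <phi_{not b,x}| K |phi_{not b,x}>.  Expanding K in the
   orthonormal basis phi_{b,x}, phi_{not b,x} and bounding its off-diagonal entry t by t^2 <= s e
   (positivity), each outcome contributes at most |cos 2 theta| e + |sin 2 theta| sqrt (s e) to the
   difference between cos 2 theta * p_0 and cos^2 theta * Pr[B = 0] - sin^2 theta * Pr[B = 1].
   Summing, Cauchy-Schwarz bounds the difference by sqrt epsilon.  The second quantity is fixed by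
   the deposited state, so the two reveal strategies claim 0 with probabilities within
   2 sqrt epsilon / cos 2 theta of each other, and p_1 = 1 - p_0. *)

section \<open>Positive semidefinite matrices\<close>

definition quad_form :: "'i set \<Rightarrow> ('i \<Rightarrow> 'i \<Rightarrow> complex) \<Rightarrow> ('i \<Rightarrow> complex) \<Rightarrow> complex" where
  "quad_form S A v = (\<Sum>i\<in>S. \<Sum>j\<in>S. cnj (v i) * A i j * v j)"

definition psd_on :: "'i set \<Rightarrow> ('i \<Rightarrow> 'i \<Rightarrow> complex) \<Rightarrow> bool" where
  "psd_on S A \<longleftrightarrow> (\<forall>v. 0 \<le> quad_form S A v)"

lemma psd_iff_psd_on_UNIV: "psd A \<longleftrightarrow> psd_on UNIV A"
  by (simp add: psd_def psd_on_def quad_form_def)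

lemma quad_form_pair:
  assumes "i \<noteq> j"
  shows "quad_form {i, j} A v = cnj (v i) * A i i * v i + cnj (v i) * A i j * v j
    + cnj (v j) * A j i * v i + cnj (v j) * A j j * v j"
  using assms by (simp add: quad_form_def)

lemma psd_on_subset:
  fixes A :: "'i \<Rightarrow> 'i \<Rightarrow> complex"
  assumes "finite S" "T \<subseteq> S" "psd_on S A"
  shows "psd_on T A"
  unfolding psd_on_def
proof
  fix v :: "'i \<Rightarrow> complex"
  define w where "w i = (if i \<in> T then v i else 0)" for i
  have "quad_form S A w = quad_form T A w"
    unfolding quad_form_def using assms(1,2)
    by (intro sum.mono_neutral_right sum.mono_neutral_cong_right) (auto simp: w_def)
  also have "\<dots> = quad_form T A v"
    unfolding quad_form_def by (intro sum.cong refl) (simp add: w_def)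
  finally show "0 \<le> quad_form T A v"
    using assms(3) unfolding psd_on_def by metis
qed

lemma psd_on_pair:
  assumes "finite S" "psd_on S A" "i \<in> S" "j \<in> S" "i \<noteq> j"
  shows "0 \<le> cnj a * A i i * a + cnj a * A i j * b + cnj b * A j i * a + cnj b * A j j * b"
proof -
  have "psd_on {i, j} A"
    by (rule psd_on_subset[OF assms(1) _ assms(2)]) (use assms in auto)
  then have "0 \<le> quad_form {i, j} A (\<lambda>k. if k = i then a else b)"
    unfolding psd_on_def by blast
  then show ?thesis
    unfolding quad_form_pair[OF assms(5)] using assms(5) by simp
qed

lemma psd_on_diag_nonneg:
  assumes "finite S" "psd_on S A" "i \<in> S"
  shows "0 \<le> A i i"
proof -
  have "psd_on {i} A"
    by (rule psd_on_subset[OF assms(1) _ assms(2)]) (use assms in auto)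
  then have "0 \<le> quad_form {i} A (\<lambda>_. 1)"
    unfolding psd_on_def by blast
  then show ?thesis
    by (simp add: quad_form_def)
qed

lemma psd_on_hermitian:
  assumes "finite S" "psd_on S A" "i \<in> S" "j \<in> S"
  shows "A j i = cnj (A i j)"
proof -
  have real_diag: "Im (A k k) = 0" if "k \<in> S" for k
    using psd_on_diag_nonneg[OF assms(1,2) that] by (simp add: less_eq_complex_def)
  show ?thesis
  proof (cases "i = j")
    case True
    then show ?thesis
      using real_diag[OF assms(3)] by (simp add: complex_eq_iff)
  next
    case False
    note pair = psd_on_pair[OF assms False]
    have "Im (A i j) + Im (A j i) = 0"
      using pair[of 1 1] real_diag assms(3,4) by (simp add: less_eq_complex_def)
    moreover have "Re (A i j) - Re (A j i) = 0"
      using pair[of 1 \<i>] real_diag assms(3,4) by (simp add: less_eq_complex_def)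
    ultimately show ?thesis
      by (simp add: complex_eq_iff)
  qed
qed

lemma psd_on_zero_diag:
  assumes "finite S" "psd_on S A" "k \<in> S" "j \<in> S" "A k k = 0"
  shows "A k j = 0"
proof (rule ccontr)
  assume nonzero: "A k j \<noteq> 0"
  define z where "z = A k j"
  \<comment> \<open>For large t the form on \<open>{k, j}\<close> at the vector \<open>(- t z, 1)\<close> becomes negative.\<close>
  define t where "t = (Re (A j j) + 1) / (2 * (cmod z)\<^sup>2)"
  have "k \<noteq> j"
    using nonzero assms(5) by auto
  then have "0 \<le> cnj (- of_real t * z) * A k k * (- of_real t * z)
      + cnj (- of_real t * z) * A k j * 1 + cnj 1 * A j k * (- of_real t * z) + cnj 1 * A j j * 1"
    by (rule psd_on_pair[OF assms(1-4)])
  also have "\<dots> = - 2 * of_real t * (z * cnj z) + A j j"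
    using assms(5) psd_on_hermitian[OF assms(1-4)] by (simp add: z_def)
  also have "\<dots> = of_real (- 2 * t * (cmod z)\<^sup>2) + A j j"
    by (simp flip: complex_norm_square)
  finally have "2 * t * (cmod z)\<^sup>2 \<le> Re (A j j)"
    by (simp add: less_eq_complex_def)
  moreover have "2 * t * (cmod z)\<^sup>2 = Re (A j j) + 1"
    using nonzero by (simp add: t_def z_def)
  ultimately show False
    by simp
qed

lemma quad_form_add_unit:
  assumes "finite S" "k \<in> S"
  shows "quad_form S A (\<lambda>i. v i + (if i = k then l else 0))
    = quad_form S A v + cnj l * (\<Sum>j\<in>S. A k j * v j) + l * (\<Sum>i\<in>S. cnj (v i) * A i k)
      + cnj l * l * A k k"
proof -
  have expand: "cnj (v i + (if i = k then l else 0)) * A i j * (v j + (if j = k then l else 0))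
     = cnj (v i) * A i j * v j + (if i = k then cnj l * (A k j * v j) else 0)
       + (if j = k then l * (cnj (v i) * A i k) else 0)
       + (if j = k then if i = k then cnj l * l * A k k else 0 else 0)" for i j
    by (simp add: algebra_simps)
  have row: "(\<Sum>i\<in>S. \<Sum>j\<in>S. if i = k then cnj l * (A k j * v j) else 0) = cnj l * (\<Sum>j\<in>S. A k j * v j)"
    using assms by (subst sum.swap) (simp add: sum_distrib_left)
  show ?thesis
    unfolding quad_form_def expand sum.distrib row
    using assms by (simp add: sum_distrib_left)
qed

lemma psd_on_schur_complement:
  assumes "finite S" "psd_on S A" "k \<in> S"
  shows "psd_on S (\<lambda>i j. A i j - A i k * A k j / A k k)"
proof (cases "A k k = 0")
  case True
  then show ?thesis
    using assms(2) by simp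
next
  case False
  have herm: "A j i = cnj (A i j)" if "i \<in> S" "j \<in> S" for i j
    using psd_on_hermitian[OF assms(1,2) that] .
  have real_kk: "cnj (A k k) = A k k"
    using herm[OF assms(3,3)] by (rule sym)
  show ?thesis
    unfolding psd_on_def
  proof
    fix v
    define \<beta> where "\<beta> = (\<Sum>j\<in>S. A k j * v j)"
    have column: "(\<Sum>i\<in>S. cnj (v i) * A i k) = cnj \<beta>"
      unfolding \<beta>_def cnj_sum
    proof (rule sum.cong[OF refl])
      fix i
      assume "i \<in> S"
      then have "A i k = cnj (A k i)"
        by (rule herm[OF assms(3)])
      then show "cnj (v i) * A i k = cnj (A k i * v i)"
        by (simp add: mult.commute)
    qed
    have "quad_form S (\<lambda>i j. A i j - A i k * A k j / A k k) v
        = (\<Sum>i\<in>S. \<Sum>j\<in>S. cnj (v i) * A i j * v j - (cnj (v i) * A i k) * (A k j * v j) / A k k)"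
      unfolding quad_form_def by (simp add: algebra_simps)
    also have "\<dots> = quad_form S A v - (\<Sum>i\<in>S. cnj (v i) * A i k) * (\<Sum>j\<in>S. A k j * v j) / A k k"
      by (simp add: quad_form_def sum_subtractf sum_product sum_divide_distrib)
    also have "\<dots> = quad_form S A v - cnj \<beta> * \<beta> / A k k"
      unfolding column \<beta>_def ..
    also have "\<dots> = quad_form S A (\<lambda>i. v i + (if i = k then - \<beta> / A k k else 0))"
      unfolding quad_form_add_unit[OF assms(1,3)] column \<beta>_def[symmetric]
      using False real_kk by (simp add: field_simps)
    also have "0 \<le> \<dots>"
      using assms(2) unfolding psd_on_def by blast
    finally show "0 \<le> quad_form S (\<lambda>i j. A i j - A i k * A k j / A k k) v" .
  qed
qed

lemma psd_on_gram:
  assumes "finite S" "psd_on S A"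
  shows "\<exists>(n::nat) u. \<forall>i\<in>S. \<forall>j\<in>S. A i j = (\<Sum>l<n. u l i * cnj (u l j))"
  using assms
proof (induction S arbitrary: A rule: finite_induct)
  case empty
  then show ?case
    by simp
next
  case (insert k F)
  define S where "S = insert k F"
  have fin: "finite S" and psd: "psd_on S A" and k: "k \<in> S"
    using insert by (auto simp: S_def)
  have herm: "A j i = cnj (A i j)" if "i \<in> S" "j \<in> S" for i j
    using psd_on_hermitian[OF fin psd that] .
  \<comment> \<open>Split off the rank-one part carried by column k.  If \<open>A k k = 0\<close>, the junk values
    \<open>x / 0 = 0\<close> and \<open>sqrt 0 = 0\<close> give \<open>B = A\<close> and a zero new vector, so no case split is needed.\<close>
  define B where "B i j = A i j - A i k * A k j / A k k" for i j
  have B_psd: "psd_on S B"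
    unfolding B_def by (rule psd_on_schur_complement[OF fin psd k])
  have B_row: "B k j = 0" and B_col: "B j k = 0" if "j \<in> S" for j
  proof -
    have "A k j = 0 \<and> A j k = 0" if "A k k = 0"
      using psd_on_zero_diag[OF fin psd k \<open>j \<in> S\<close> that] herm[OF k \<open>j \<in> S\<close>] by simp
    then show "B k j = 0" "B j k = 0"
      by (auto simp: B_def)
  qed
  have "psd_on F B"
    by (rule psd_on_subset[OF fin _ B_psd]) (auto simp: S_def)
  with insert.IH obtain n :: nat and u where u: "\<forall>i\<in>F. \<forall>j\<in>F. B i j = (\<Sum>l<n. u l i * cnj (u l j))"
    by blast
  define r where "r = complex_of_real (sqrt (Re (A k k)))"
  define w where "w = case_nat (\<lambda>i. A i k / r) (\<lambda>l i. if i = k then 0 else u l i)"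
  have "\<forall>i\<in>S. \<forall>j\<in>S. A i j = (\<Sum>l<Suc n. w l i * cnj (w l j))"
  proof (intro ballI)
    fix i j
    assume i: "i \<in> S" and j: "j \<in> S"
    have r_sq: "r * cnj r = A k k"
      using psd_on_diag_nonneg[OF fin psd k]
      by (simp add: r_def less_eq_complex_def complex_eq_iff flip: of_real_mult)
    have "w 0 i * cnj (w 0 j) = A i k * cnj (A j k) / (r * cnj r)"
      by (simp add: w_def)
    also have "\<dots> = A i k * A k j / A k k"
      unfolding r_sq herm[OF k j] by simp
    finally have rank_one: "w 0 i * cnj (w 0 j) = A i k * A k j / A k k" .
    have rest: "(\<Sum>l<n. w (Suc l) i * cnj (w (Suc l) j)) = B i j"
    proof (cases "i = k \<or> j = k")
      case True
      then show ?thesis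
        using B_row[OF j] B_col[OF i] by (auto simp: w_def)
    next
      case False
      then have "i \<in> F" "j \<in> F"
        using i j by (auto simp: S_def)
      then show ?thesis
        using u False by (simp add: w_def)
    qed
    show "A i j = (\<Sum>l<Suc n. w l i * cnj (w l j))"
      unfolding sum.lessThan_Suc_shift rest rank_one by (simp add: B_def)
  qed
  then show ?case
    unfolding S_def by blast
qed

lemma psd_trace_mult_nonneg:
  fixes A B :: "'i::finite \<Rightarrow> 'i \<Rightarrow> complex"
  assumes "psd A" "psd B"
  shows "0 \<le> (\<Sum>i\<in>UNIV. \<Sum>j\<in>UNIV. A i j * B j i)"
proof -
  obtain n :: nat and u where u: "\<And>i j. B i j = (\<Sum>l<n. u l i * cnj (u l j))"
    using psd_on_gram[of UNIV B] assms(2) unfolding psd_iff_psd_on_UNIV by auto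
  have "(\<Sum>i\<in>UNIV. \<Sum>j\<in>UNIV. A i j * B j i) = (\<Sum>i\<in>UNIV. \<Sum>j\<in>UNIV. \<Sum>l<n. cnj (u l i) * A i j * u l j)"
    unfolding u by (simp add: sum_distrib_left algebra_simps)
  also have "\<dots> = (\<Sum>l<n. quad_form UNIV A (u l))"
    unfolding quad_form_def by (simp add: sum.swap[of _ "{..<n}"])
  also have "0 \<le> \<dots>"
    using assms(1) unfolding psd_iff_psd_on_UNIV psd_on_def by (simp add: sum_nonneg)
  finally show ?thesis .
qed

lemma sum_UNIV_pair: "(\<Sum>x\<in>UNIV. f x) = (\<Sum>a\<in>UNIV. \<Sum>b\<in>UNIV. f (a, b))"
  by (simp add: sum.cartesian_product)

lemma psd_compression:
  fixes \<rho> :: "('a::finite \<times> 'b::finite) \<Rightarrow> ('a \<times> 'b) \<Rightarrow> complex"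
  assumes "psd \<rho>"
  shows "psd (\<lambda>a a'. \<Sum>b\<in>UNIV. \<Sum>b'\<in>UNIV. cnj (w b) * \<rho> (a, b) (a', b') * w b')"
  unfolding psd_def
proof
  fix v :: "'a \<Rightarrow> complex"
  have "(\<Sum>a\<in>UNIV. \<Sum>a'\<in>UNIV. cnj (v a) * (\<Sum>b\<in>UNIV. \<Sum>b'\<in>UNIV. cnj (w b) * \<rho> (a, b) (a', b') * w b') * v a')
      = (\<Sum>a\<in>UNIV. \<Sum>b\<in>UNIV. \<Sum>a'\<in>UNIV. \<Sum>b'\<in>UNIV. cnj (v a * w b) * \<rho> (a, b) (a', b') * (v a' * w b'))"
    by (subst sum.swap) (simp add: sum_distrib_left sum_distrib_right algebra_simps)
  also have "\<dots> = (\<Sum>x\<in>UNIV. \<Sum>y\<in>UNIV. cnj (v (fst x) * w (snd x)) * \<rho> x y * (v (fst y) * w (snd y)))"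
    by (simp only: sum_UNIV_pair fst_conv snd_conv)
  also have "0 \<le> \<dots>"
    using assms[unfolded psd_def, rule_format, of "\<lambda>x. v (fst x) * w (snd x)"] by simp
  finally show "0 \<le> (\<Sum>a\<in>UNIV. \<Sum>a'\<in>UNIV. cnj (v a) * (\<Sum>b\<in>UNIV. \<Sum>b'\<in>UNIV. cnj (w b) * \<rho> (a, b) (a', b') * w b') * v a')" .
qed

section \<open>Bob's conditional states\<close>

lemma sum_swap_pairs:
  "(\<Sum>a\<in>A. \<Sum>b\<in>B. \<Sum>c\<in>C. \<Sum>d\<in>D. f a b c d) = (\<Sum>c\<in>C. \<Sum>d\<in>D. \<Sum>a\<in>A. \<Sum>b\<in>B. f a b c d)"
proof -
  have "(\<Sum>a\<in>A. \<Sum>b\<in>B. \<Sum>c\<in>C. \<Sum>d\<in>D. f a b c d) = (\<Sum>a\<in>A. \<Sum>c\<in>C. \<Sum>b\<in>B. \<Sum>d\<in>D. f a b c d)"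
    by (intro sum.cong refl sum.swap)
  also have "\<dots> = (\<Sum>c\<in>C. \<Sum>a\<in>A. \<Sum>b\<in>B. \<Sum>d\<in>D. f a b c d)"
    by (rule sum.swap)
  also have "\<dots> = (\<Sum>c\<in>C. \<Sum>a\<in>A. \<Sum>d\<in>D. \<Sum>b\<in>B. f a b c d)"
    by (intro sum.cong refl sum.swap)
  also have "\<dots> = (\<Sum>c\<in>C. \<Sum>d\<in>D. \<Sum>a\<in>A. \<Sum>b\<in>B. f a b c d)"
    by (intro sum.cong refl sum.swap)
  finally show ?thesis .
qed

(* The real part of the transpose of tr_A ((E \<otimes> 1) \<rho>), Bob's unnormalised state after Alice
   obtains the outcome E.  Only its quadratic form is ever evaluated, and that does not see the
   transposition. *)
definition outcome_matrix ::
  "(('a::finite \<times> bool) \<Rightarrow> ('a \<times> bool) \<Rightarrow> complex) \<Rightarrow> ('a \<Rightarrow> 'a \<Rightarrow> complex) \<Rightarrow> bool \<Rightarrow> bool \<Rightarrow> real" where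
  "outcome_matrix \<rho> E c c' = Re (\<Sum>a\<in>UNIV. \<Sum>a'\<in>UNIV. E a a' * \<rho> (a', c') (a, c))"

definition bilinear_form :: "('i::finite \<Rightarrow> 'i \<Rightarrow> real) \<Rightarrow> ('i \<Rightarrow> real) \<Rightarrow> ('i \<Rightarrow> real) \<Rightarrow> real" where
  "bilinear_form K u w = (\<Sum>i\<in>UNIV. \<Sum>j\<in>UNIV. u i * K i j * w j)"

definition marginal_B :: "(('a::finite \<times> bool) \<Rightarrow> ('a \<times> bool) \<Rightarrow> complex) \<Rightarrow> bool \<Rightarrow> real" where
  "marginal_B \<rho> c = Re (\<Sum>a\<in>UNIV. \<rho> (a, c) (a, c))"

lemma joint_prob_of_real:
  "joint_prob \<rho> E (\<lambda>c c'. complex_of_real (F c c'))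
    = (\<Sum>c\<in>UNIV. \<Sum>c'\<in>UNIV. F c c' * outcome_matrix \<rho> E c c')"
proof -
  have "(\<Sum>a\<in>UNIV. \<Sum>a'\<in>UNIV. \<Sum>c\<in>UNIV. \<Sum>c'\<in>UNIV. E a a' * of_real (F c c') * \<rho> (a', c') (a, c))
     = (\<Sum>c\<in>UNIV. \<Sum>c'\<in>UNIV. of_real (F c c') * (\<Sum>a\<in>UNIV. \<Sum>a'\<in>UNIV. E a a' * \<rho> (a', c') (a, c)))"
    by (subst sum_swap_pairs) (simp add: sum_distrib_left algebra_simps)
  then show ?thesis
    unfolding joint_prob_def outcome_matrix_def by (simp add: Re_sum)
qed

lemma joint_prob_proj_nonneg:
  assumes "psd \<rho>" "psd E"
  shows "0 \<le> joint_prob \<rho> E (proj w)"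
proof -
  define \<sigma> where "\<sigma> a a' = (\<Sum>c\<in>UNIV. \<Sum>c'\<in>UNIV.
      cnj (complex_of_real (w c)) * \<rho> (a, c) (a', c') * complex_of_real (w c'))" for a a'
  have "psd \<sigma>"
    unfolding \<sigma>_def by (rule psd_compression[OF assms(1)])
  then have "0 \<le> (\<Sum>a\<in>UNIV. \<Sum>a'\<in>UNIV. E a a' * \<sigma> a' a)"
    by (rule psd_trace_mult_nonneg[OF assms(2)])
  also have "\<sigma> a' a = (\<Sum>c\<in>UNIV. \<Sum>c'\<in>UNIV. proj w c c' * \<rho> (a', c') (a, c))" for a a'
    unfolding \<sigma>_def proj_def by (subst sum.swap) (simp add: algebra_simps)
  then have "(\<Sum>a\<in>UNIV. \<Sum>a'\<in>UNIV. E a a' * \<sigma> a' a)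
      = (\<Sum>a\<in>UNIV. \<Sum>a'\<in>UNIV. \<Sum>c\<in>UNIV. \<Sum>c'\<in>UNIV. E a a' * proj w c c' * \<rho> (a', c') (a, c))"
    by (simp add: sum_distrib_left mult.assoc)
  finally show ?thesis
    unfolding joint_prob_def by (simp add: less_eq_complex_def)
qed

lemma outcome_matrix_form_nonneg:
  assumes "psd \<rho>" "psd E"
  shows "0 \<le> bilinear_form (outcome_matrix \<rho> E) w w"
proof -
  have "bilinear_form (outcome_matrix \<rho> E) w w = joint_prob \<rho> E (proj w)"
    unfolding proj_def joint_prob_of_real bilinear_form_def by (simp add: algebra_simps)
  then show ?thesis
    using joint_prob_proj_nonneg[OF assms] by simp
qed

lemma povm_outcome_matrix_diag_sum:
  assumes "povm4 M"
  shows "(\<Sum>b\<in>UNIV. \<Sum>x\<in>UNIV. outcome_matrix \<rho> (M b x) c c) = marginal_B \<rho> c"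
proof -
  have "(\<Sum>b\<in>UNIV. \<Sum>x\<in>UNIV. \<Sum>a\<in>UNIV. \<Sum>a'\<in>UNIV. M b x a a' * \<rho> (a', c) (a, c))
      = (\<Sum>a\<in>UNIV. \<Sum>a'\<in>UNIV. (\<Sum>b\<in>UNIV. \<Sum>x\<in>UNIV. M b x a a') * \<rho> (a', c) (a, c))"
    by (subst sum_swap_pairs) (simp add: sum_distrib_right)
  also have "\<dots> = (\<Sum>a\<in>UNIV. \<Sum>a'\<in>UNIV. id_op a a' * \<rho> (a', c) (a, c))"
    using assms unfolding povm4_def by simp
  also have "\<dots> = (\<Sum>a\<in>UNIV. \<Sum>a'\<in>UNIV. if a' = a then \<rho> (a', c) (a, c) else 0)"
    by (intro sum.cong refl) (simp add: id_op_def)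
  also have "\<dots> = (\<Sum>a\<in>UNIV. \<rho> (a, c) (a, c))"
    by simp
  finally show ?thesis
    unfolding outcome_matrix_def marginal_B_def by (simp flip: Re_sum)
qed

lemma claim_prob_eq:
  "claim_prob \<rho> M b
    = (\<Sum>x\<in>UNIV. outcome_matrix \<rho> (M b x) False False + outcome_matrix \<rho> (M b x) True True)"
proof -
  have id_real: "id_op = (\<lambda>c c' :: bool. complex_of_real (if c = c' then 1 else 0))"
    by (intro ext) (simp add: id_op_def)
  show ?thesis
    unfolding claim_prob_def id_real joint_prob_of_real by (simp add: UNIV_bool)
qed

lemma err_prob_eq:
  "err_prob \<theta> \<rho> M = (\<Sum>b\<in>UNIV. \<Sum>x\<in>UNIV.
      bilinear_form (outcome_matrix \<rho> (M b x)) (phi_bx \<theta> (\<not> b) x) (phi_bx \<theta> (\<not> b) x))"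
proof -
  have proj_real: "proj w = (\<lambda>c c'. complex_of_real (w c * w c'))" for w
    by (intro ext) (simp add: proj_def)
  show ?thesis
    unfolding err_prob_def bilinear_form_def proj_real joint_prob_of_real by (simp add: algebra_simps)
qed

lemma density_marginal_sum:
  assumes "density_op \<rho>"
  shows "marginal_B \<rho> False + marginal_B \<rho> True = 1"
proof -
  have "(\<Sum>x\<in>UNIV. \<rho> x x) = 1"
    using assms unfolding density_op_def by blast
  then have "(\<Sum>a\<in>UNIV. \<Sum>c\<in>UNIV. \<rho> (a, c) (a, c)) = 1"
    by (simp only: sum_UNIV_pair)
  then have "Re ((\<Sum>a\<in>UNIV. \<rho> (a, False) (a, False)) + (\<Sum>a\<in>UNIV. \<rho> (a, True) (a, True))) = 1"
    by (simp add: UNIV_bool sum.distrib)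
  then show ?thesis
    unfolding marginal_B_def by simp
qed

lemma claim_prob_sum:
  assumes "density_op \<rho>" "povm4 M"
  shows "claim_prob \<rho> M False + claim_prob \<rho> M True = 1"
  using density_marginal_sum[OF assms(1)] povm_outcome_matrix_diag_sum[OF assms(2), of \<rho> False]
    povm_outcome_matrix_diag_sum[OF assms(2), of \<rho> True]
  by (simp add: claim_prob_eq UNIV_bool)

section \<open>Positive binary quadratic forms\<close>

lemma nonneg_binary_form_discriminant:
  fixes p m q :: real
  assumes nonneg: "\<And>x y. 0 \<le> p * x\<^sup>2 + 2 * m * x * y + q * y\<^sup>2"
  shows "m\<^sup>2 \<le> p * q"
proof (cases "p > 0")
  case True
  have "0 \<le> p * (p * q - m\<^sup>2)"
    using nonneg[of m "- p"] by (simp add: algebra_simps power2_eq_square)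
  then show ?thesis
    using True by (simp add: zero_le_mult_iff)
next
  case False
  then have "p = 0"
    using nonneg[of 1 0] by simp
  have "m = 0"
  proof (rule ccontr)
    assume "m \<noteq> 0"
    then show False
      using nonneg[of "- (q + 1) / (2 * m)" 1] \<open>p = 0\<close> by (simp add: field_simps)
  qed
  then show ?thesis
    using nonneg[of 0 1] \<open>p = 0\<close> by simp
qed

lemma bilinear_form_cauchy_schwarz:
  fixes K :: "'i::finite \<Rightarrow> 'i \<Rightarrow> real"
  assumes "\<And>w. 0 \<le> bilinear_form K w w"
  shows "((bilinear_form K u w + bilinear_form K w u) / 2)\<^sup>2 \<le> bilinear_form K u u * bilinear_form K w w"
proof (rule nonneg_binary_form_discriminant)
  fix x y :: real
  have "bilinear_form K (\<lambda>i. x * u i + y * w i) (\<lambda>i. x * u i + y * w i)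
      = bilinear_form K u u * x\<^sup>2 + 2 * ((bilinear_form K u w + bilinear_form K w u) / 2) * x * y
        + bilinear_form K w w * y\<^sup>2"
    by (simp add: bilinear_form_def algebra_simps power2_eq_square sum.distrib sum_distrib_left)
  then show "0 \<le> bilinear_form K u u * x\<^sup>2 + 2 * ((bilinear_form K u w + bilinear_form K w u) / 2) * x * y
        + bilinear_form K w w * y\<^sup>2"
    using assms by metis
qed

(* K expanded in the orthonormal basis phi \<alpha>, phi (\<alpha> + pi / 2): its component along
   phi (\<alpha> + pi / 2) drops out. *)
lemma qubit_form_decomposition:
  fixes K :: "bool \<Rightarrow> bool \<Rightarrow> real"
  shows "sin \<alpha> ^ 2 * K True True - cos \<alpha> ^ 2 * K False False
    = - cos (2 * \<alpha>) * bilinear_form K (phi \<alpha>) (phi \<alpha>)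
      + sin (2 * \<alpha>) * ((bilinear_form K (phi (\<alpha> + pi / 2)) (phi \<alpha>)
        + bilinear_form K (phi \<alpha>) (phi (\<alpha> + pi / 2))) / 2)"
  using sin_cos_squared_add[of \<alpha>]
  by (simp add: bilinear_form_def phi_def UNIV_bool cos_add sin_add cos_double sin_double
      del: sin_cos_squared_add) algebra

lemma qubit_form_trace:
  fixes K :: "bool \<Rightarrow> bool \<Rightarrow> real"
  shows "bilinear_form K (phi \<alpha>) (phi \<alpha>) + bilinear_form K (phi (\<alpha> + pi / 2)) (phi (\<alpha> + pi / 2))
    = K False False + K True True"
  using sin_cos_squared_add[of \<alpha>]
  by (simp add: bilinear_form_def phi_def UNIV_bool cos_add sin_add del: sin_cos_squared_add) algebra

lemma qubit_block_bound:
  fixes K :: "bool \<Rightarrow> bool \<Rightarrow> real"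
  assumes "\<And>w. 0 \<le> bilinear_form K w w"
  shows "\<bar>sin \<alpha> ^ 2 * K True True - cos \<alpha> ^ 2 * K False False\<bar>
    \<le> \<bar>cos (2 * \<alpha>)\<bar> * bilinear_form K (phi \<alpha>) (phi \<alpha>)
      + \<bar>sin (2 * \<alpha>)\<bar> * sqrt (bilinear_form K (phi (\<alpha> + pi / 2)) (phi (\<alpha> + pi / 2))
          * bilinear_form K (phi \<alpha>) (phi \<alpha>))"
proof -
  define u where "u = phi (\<alpha> + pi / 2)"
  define e where "e = bilinear_form K (phi \<alpha>) (phi \<alpha>)"
  define t where "t = (bilinear_form K u (phi \<alpha>) + bilinear_form K (phi \<alpha>) u) / 2"
  have "t\<^sup>2 \<le> bilinear_form K u u * e"
    unfolding t_def e_def by (rule bilinear_form_cauchy_schwarz[OF assms])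
  then have "sqrt (t\<^sup>2) \<le> sqrt (bilinear_form K u u * e)"
    by (rule real_sqrt_le_mono)
  then have t_bound: "\<bar>t\<bar> \<le> sqrt (bilinear_form K u u * e)"
    by simp
  have "0 \<le> e"
    unfolding e_def by (rule assms)
  have "\<bar>sin \<alpha> ^ 2 * K True True - cos \<alpha> ^ 2 * K False False\<bar> = \<bar>- cos (2 * \<alpha>) * e + sin (2 * \<alpha>) * t\<bar>"
    unfolding qubit_form_decomposition[of \<alpha> K] u_def e_def t_def ..
  also have "\<dots> \<le> \<bar>- cos (2 * \<alpha>) * e\<bar> + \<bar>sin (2 * \<alpha>) * t\<bar>"
    by (rule abs_triangle_ineq)
  also have "\<dots> = \<bar>cos (2 * \<alpha>)\<bar> * e + \<bar>sin (2 * \<alpha>)\<bar> * \<bar>t\<bar>"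
    using \<open>0 \<le> e\<close> by (simp add: abs_mult)
  also have "\<dots> \<le> \<bar>cos (2 * \<alpha>)\<bar> * e + \<bar>sin (2 * \<alpha>)\<bar> * sqrt (bilinear_form K u u * e)"
    using t_bound by (simp add: mult_left_mono)
  finally show ?thesis
    unfolding u_def e_def .
qed

section \<open>The binding bound\<close>

lemma escrow_angle_sin_cos_sq:
  "sin (escrow_angle \<theta> b x) ^ 2 = (if b then cos \<theta> ^ 2 else sin \<theta> ^ 2)"
  "cos (escrow_angle \<theta> b x) ^ 2 = (if b then sin \<theta> ^ 2 else cos \<theta> ^ 2)"
  by (simp_all add: escrow_angle_def sin_diff cos_diff sin_add cos_add)

lemma escrow_angle_double:
  "\<bar>cos (2 * escrow_angle \<theta> b x)\<bar> = \<bar>cos (2 * \<theta>)\<bar>"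
  "\<bar>sin (2 * escrow_angle \<theta> b x)\<bar> = \<bar>sin (2 * \<theta>)\<bar>"
  unfolding cos_double sin_double
  by (auto simp: escrow_angle_def sin_diff cos_diff sin_add cos_add abs_minus_commute mult_ac)

lemma sum_sqrt_error_bound:
  fixes s e :: "'i \<Rightarrow> real"
  assumes "finite I" "\<And>i. i \<in> I \<Longrightarrow> 0 \<le> s i" "\<And>i. i \<in> I \<Longrightarrow> 0 \<le> e i"
    and "(\<Sum>i\<in>I. s i + e i) = 1" "(\<Sum>i\<in>I. e i) \<le> \<epsilon>"
    and "0 \<le> v" "c\<^sup>2 + v\<^sup>2 = 1"
  shows "(\<Sum>i\<in>I. c * e i + v * sqrt (s i * e i)) \<le> sqrt \<epsilon>"
proof -
  define E where "E = (\<Sum>i\<in>I. e i)"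
  have E_nonneg: "0 \<le> E" and S_eq: "(\<Sum>i\<in>I. s i) = 1 - E" and E_le_1: "E \<le> 1"
    using assms(2-4) sum_nonneg[of I s] sum_nonneg[of I e] by (auto simp: E_def sum.distrib)
  have "(\<Sum>i\<in>I. sqrt (s i * e i)) = (\<Sum>i\<in>I. \<bar>sqrt (s i)\<bar> * \<bar>sqrt (e i)\<bar>)"
    using assms(2,3) by (simp add: real_sqrt_mult)
  also have "\<dots> \<le> L2_set (\<lambda>i. sqrt (s i)) I * L2_set (\<lambda>i. sqrt (e i)) I"
    by (rule L2_set_mult_ineq)
  also have "\<dots> = sqrt (1 - E) * sqrt E"
    using assms(2,3) S_eq by (simp add: L2_set_def E_def)
  finally have cs: "(\<Sum>i\<in>I. sqrt (s i * e i)) \<le> sqrt (1 - E) * sqrt E" .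
  have "c * sqrt E + v * sqrt (1 - E) \<le> 1"
  proof -
    have "(c * sqrt E + v * sqrt (1 - E))\<^sup>2 \<le> (c\<^sup>2 + v\<^sup>2) * ((sqrt E)\<^sup>2 + (sqrt (1 - E))\<^sup>2)"
      using zero_le_power2[of "c * sqrt (1 - E) - v * sqrt E"]
      by (simp add: algebra_simps power2_eq_square)
    also have "\<dots> = 1"
      using assms(7) E_nonneg E_le_1 by simp
    finally show ?thesis
      by (metis abs_le_D1 abs_square_le_1)
  qed
  have "(\<Sum>i\<in>I. c * e i + v * sqrt (s i * e i)) = c * E + v * (\<Sum>i\<in>I. sqrt (s i * e i))"
    by (simp add: E_def sum.distrib sum_distrib_left)
  also have "\<dots> \<le> c * E + v * (sqrt (1 - E) * sqrt E)"
    using cs assms(6) by (simp add: mult_left_mono)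
  also have "\<dots> = sqrt E * (c * sqrt E + v * sqrt (1 - E))"
    using E_nonneg by (simp add: algebra_simps)
  also have "\<dots> \<le> sqrt E"
    using \<open>c * sqrt E + v * sqrt (1 - E) \<le> 1\<close> E_nonneg by (simp add: mult_left_le)
  also have "\<dots> \<le> sqrt \<epsilon>"
    using assms(5) by (simp add: E_def)
  finally show ?thesis .
qed

lemma strategy_claim_estimate:
  fixes \<rho> :: "('a::finite \<times> bool) \<Rightarrow> ('a \<times> bool) \<Rightarrow> complex"
  assumes "density_op \<rho>" "povm4 X" "err_prob \<theta> \<rho> X \<le> \<epsilon>"
  shows "\<bar>cos (2 * \<theta>) * claim_prob \<rho> X False
      - (cos \<theta> ^ 2 * marginal_B \<rho> False - sin \<theta> ^ 2 * marginal_B \<rho> True)\<bar> \<le> sqrt \<epsilon>"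
proof -
  define K where "K = (\<lambda>(b, x). outcome_matrix \<rho> (X b x))"
  \<comment> \<open>Bob errs on outcome \<open>p\<close> along \<open>phi (\<alpha> p)\<close>, with weight \<open>e p\<close>.\<close>
  define \<alpha> where "\<alpha> = (\<lambda>(b, x). escrow_angle \<theta> (\<not> b) x)"
  define e where "e p = bilinear_form (K p) (phi (\<alpha> p)) (phi (\<alpha> p))" for p
  define s where "s p = bilinear_form (K p) (phi (\<alpha> p + pi / 2)) (phi (\<alpha> p + pi / 2))" for p
  define f where "f p = sin (\<alpha> p) ^ 2 * K p True True - cos (\<alpha> p) ^ 2 * K p False False" for p
  have K_psd: "0 \<le> bilinear_form (K p) w w" for p w
  proof -
    have "psd \<rho>" "\<And>b x. psd (X b x)"
      using assms(1,2) by (auto simp: density_op_def povm4_def)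
    then show ?thesis
      by (cases p) (simp add: K_def outcome_matrix_form_nonneg)
  qed
  have marginal: "(\<Sum>p\<in>UNIV. K p c c) = marginal_B \<rho> c" for c
    using povm_outcome_matrix_diag_sum[OF assms(2), of \<rho> c] by (simp add: K_def sum_UNIV_pair)
  have "cos (2 * \<theta>) * claim_prob \<rho> X False
      - (cos \<theta> ^ 2 * marginal_B \<rho> False - sin \<theta> ^ 2 * marginal_B \<rho> True) = (\<Sum>p\<in>UNIV. f p)"
    unfolding marginal[symmetric] claim_prob_eq cos_double
    by (simp add: f_def K_def \<alpha>_def UNIV_bool sum_UNIV_pair escrow_angle_sin_cos_sq algebra_simps)
  also have "\<bar>\<dots>\<bar> \<le> (\<Sum>p\<in>UNIV. \<bar>f p\<bar>)"
    by (rule sum_abs)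
  also have "\<dots> \<le> (\<Sum>p\<in>UNIV. \<bar>cos (2 * \<theta>)\<bar> * e p + \<bar>sin (2 * \<theta>)\<bar> * sqrt (s p * e p))"
  proof (rule sum_mono)
    fix p :: "bool \<times> bool"
    have "\<bar>cos (2 * \<alpha> p)\<bar> = \<bar>cos (2 * \<theta>)\<bar>" "\<bar>sin (2 * \<alpha> p)\<bar> = \<bar>sin (2 * \<theta>)\<bar>"
      by (cases p, simp add: \<alpha>_def escrow_angle_double)+
    then show "\<bar>f p\<bar> \<le> \<bar>cos (2 * \<theta>)\<bar> * e p + \<bar>sin (2 * \<theta>)\<bar> * sqrt (s p * e p)"
      using qubit_block_bound[OF K_psd[of p], of "\<alpha> p"] by (simp add: f_def e_def s_def)
  qed
  also have "\<dots> \<le> sqrt \<epsilon>"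
  proof (rule sum_sqrt_error_bound)
    show "(\<Sum>p\<in>UNIV. s p + e p) = 1"
      using density_marginal_sum[OF assms(1)] qubit_form_trace
      by (simp add: s_def e_def sum.distrib marginal add.commute)
    show "(\<Sum>p\<in>UNIV. e p) \<le> \<epsilon>"
      using assms(3) by (simp add: err_prob_eq e_def K_def \<alpha>_def phi_bx_def sum_UNIV_pair)
    show "\<bar>cos (2 * \<theta>)\<bar>\<^sup>2 + \<bar>sin (2 * \<theta>)\<bar>\<^sup>2 = 1"
      by simp
  qed (auto simp: s_def e_def K_psd)
  finally show ?thesis .
qed

theorem theorem5:
  fixes \<theta> \<epsilon> :: real
    and \<rho> :: "('a::finite \<times> bool) \<Rightarrow> ('a \<times> bool) \<Rightarrow> complex"
    and M N :: "bool \<Rightarrow> bool \<Rightarrow> 'a \<Rightarrow> 'a \<Rightarrow> complex"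
  assumes "0 < \<theta>" and "\<theta> \<le> pi / 8" and "0 \<le> \<epsilon>"
    and "density_op \<rho>" and "povm4 M" and "povm4 N"
    and "err_prob \<theta> \<rho> M \<le> \<epsilon>" and "err_prob \<theta> \<rho> N \<le> \<epsilon>"
  shows "\<bar>claim_prob \<rho> M False - claim_prob \<rho> N False\<bar> \<le> 2 * sqrt \<epsilon> / cos (2 * \<theta>)
       \<and> \<bar>claim_prob \<rho> M True - claim_prob \<rho> N True\<bar> \<le> 2 * sqrt \<epsilon> / cos (2 * \<theta>)"
proof -
  have cos_pos: "0 < cos (2 * \<theta>)"
    using assms(1,2) by (intro cos_gt_zero) auto
  have "\<bar>cos (2 * \<theta>) * claim_prob \<rho> M False - cos (2 * \<theta>) * claim_prob \<rho> N False\<bar> \<le> 2 * sqrt \<epsilon>"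
    using strategy_claim_estimate[OF assms(4,5,7)] strategy_claim_estimate[OF assms(4,6,8)]
    unfolding abs_le_iff by linarith
  then have "cos (2 * \<theta>) * \<bar>claim_prob \<rho> M False - claim_prob \<rho> N False\<bar> \<le> 2 * sqrt \<epsilon>"
    using cos_pos by (simp add: abs_mult flip: right_diff_distrib)
  then have "\<bar>claim_prob \<rho> M False - claim_prob \<rho> N False\<bar> \<le> 2 * sqrt \<epsilon> / cos (2 * \<theta>)"
    using cos_pos by (simp add: field_simps)
  moreover have "claim_prob \<rho> M True - claim_prob \<rho> N True = - (claim_prob \<rho> M False - claim_prob \<rho> N False)"
    using claim_prob_sum[OF assms(4,5)] claim_prob_sum[OF assms(4,6)] by linarith
  ultimately show ?thesis
    by simp
qed

end
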